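(* Let $G=(V,E)$ be a finite simple graph on $n$ vertices. Let $G''$ be any graph with vertex set $V$ obtained as follows: for each vertex $v\in V$, if $v$ is not isolated, choose two distinct vertices of the closed neighborhood $N(v)\cup\{v\}$ (arbitrarily) and put the edge between them into $G''$; if $v$ is isolated, put a loop on $v$ into $G''$ (an edge already present is not duplicated). Then $$\gamma(G)\le n-\alpha(G'')=\beta(G'').$$
   Context: $N(v)$ denotes the set of neighbors of $v$ in $G$. A set $S\subseteq V$ is a dominating set of $G$ if every vertex of $V$ is in $S$ or has a neighbor in $S$; $\gamma(G)$ is the minimum size of a dominating set. For a graph $H$ possibly with loops, an independent set is a set of vertices containing no two endpoints of an edge and no vertex carrying a loop, and $\alpha(H)$ is the maximum size of an independent set; a vertex cover is a set of vertices meeting every edge (so it contains every vertex carrying a loop), and $\beta(H)$ is the minimum size of a vertex cover. *)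

theory Defs
  imports Main
begin

definition simple_graph :: "'a set \<Rightarrow> ('a \<Rightarrow> 'a \<Rightarrow> bool) \<Rightarrow> bool" where
  "simple_graph V E \<longleftrightarrow> finite V \<and> (\<forall>u v. E u v \<longrightarrow> E v u) \<and> (\<forall>v. \<not> E v v)
     \<and> (\<forall>u v. E u v \<longrightarrow> u \<in> V \<and> v \<in> V)"

definition nbhd :: "'a set \<Rightarrow> ('a \<Rightarrow> 'a \<Rightarrow> bool) \<Rightarrow> 'a \<Rightarrow> 'a set" where
  "nbhd V E v = {u \<in> V. E v u}"

definition dominating :: "'a set \<Rightarrow> ('a \<Rightarrow> 'a \<Rightarrow> bool) \<Rightarrow> 'a set \<Rightarrow> bool" where
  "dominating V E S \<longleftrightarrow> S \<subseteq> V \<and> (\<forall>v\<in>V. v \<in> S \<or> (\<exists>u\<in>S. u \<in> nbhd V E v))"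

definition domination_number :: "'a set \<Rightarrow> ('a \<Rightarrow> 'a \<Rightarrow> bool) \<Rightarrow> nat" where
  "domination_number V E = Min {card S | S. dominating V E S}"

text \<open>A graph possibly with loops on vertex set V, given by its set of edges F;
each edge is a set {a,b} of its endpoints (a loop at v is {v,v} = {v}).\<close>
definition indep_set :: "'a set \<Rightarrow> 'a set set \<Rightarrow> 'a set \<Rightarrow> bool" where
  "indep_set V F S \<longleftrightarrow> S \<subseteq> V \<and> (\<forall>e\<in>F. \<forall>a b. e = {a, b} \<longrightarrow> \<not> (a \<in> S \<and> b \<in> S))"

definition vertex_cover :: "'a set \<Rightarrow> 'a set set \<Rightarrow> 'a set \<Rightarrow> bool" where
  "vertex_cover V F S \<longleftrightarrow> S \<subseteq> V \<and> (\<forall>e\<in>F. \<forall>a b. e = {a, b} \<longrightarrow> a \<in> S \<or> b \<in> S)"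

definition independence_number :: "'a set \<Rightarrow> 'a set set \<Rightarrow> nat" where
  "independence_number V F = Max {card S | S. indep_set V F S}"

definition vertex_cover_number :: "'a set \<Rightarrow> 'a set set \<Rightarrow> nat" where
  "vertex_cover_number V F = Min {card S | S. vertex_cover V F S}"

end

theory Submission
  imports Defs
begin

text \<open>For every vertex v, G'' has an edge inside the closed neighbourhood of v in G.
  If I is independent in G'' and v \<in> I, that edge cannot lie inside I, so one of its
  endpoints is a neighbour of v outside I; hence V - I dominates G, giving
  \<gamma>(G) \<le> n - \<alpha>(G''). The equality n - \<alpha>(G'') = \<beta>(G'') is Gallai's identity: complements of
  independent sets are exactly the vertex covers.\<close>

lemma indep_set_Diff_vertex_cover:
  assumes "vertex_cover V F C"
  shows "indep_set V F (V - C)"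
  using assms unfolding indep_set_def vertex_cover_def by blast

lemma vertex_cover_Diff_indep_set:
  assumes "indep_set V F I" and "\<Union>F \<subseteq> V"
  shows "vertex_cover V F (V - I)"
  using assms unfolding indep_set_def vertex_cover_def by blast

lemma indep_set_card_le_independence_number:
  assumes "finite V" and "indep_set V F S"
  shows "card S \<le> independence_number V F"
proof -
  have "{card S | S. indep_set V F S} \<subseteq> {..card V}"
    using assms(1) unfolding indep_set_def by (auto intro: card_mono)
  then show ?thesis
    unfolding independence_number_def using assms(2)
    by (auto intro: Max_ge finite_subset)
qed

lemma maximum_indep_set_exists:
  assumes "finite V"
  obtains I where "indep_set V F I" and "card I = independence_number V F"
proof -
  have "{card S | S. indep_set V F S} \<subseteq> {..card V}"
    using assms unfolding indep_set_def by (auto intro: card_mono)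
  then have "finite {card S | S. indep_set V F S}"
    by (rule finite_subset) simp
  moreover have "indep_set V F {}"
    unfolding indep_set_def by simp
  ultimately have "independence_number V F \<in> {card S | S. indep_set V F S}"
    unfolding independence_number_def by (intro Max_in) auto
  then show ?thesis using that by auto
qed

lemma vertex_cover_number_le_card:
  assumes "finite V" and "vertex_cover V F C"
  shows "vertex_cover_number V F \<le> card C"
proof -
  have "{card S | S. vertex_cover V F S} \<subseteq> {..card V}"
    using assms(1) unfolding vertex_cover_def by (auto intro: card_mono)
  then show ?thesis
    unfolding vertex_cover_number_def using assms(2)
    by (auto intro: Min_le finite_subset)
qed

lemma minimum_vertex_cover_exists:
  assumes "finite V" and "\<Union>F \<subseteq> V"
  obtains C where "vertex_cover V F C" and "card C = vertex_cover_number V F"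
proof -
  have "{card S | S. vertex_cover V F S} \<subseteq> {..card V}"
    using assms(1) unfolding vertex_cover_def by (auto intro: card_mono)
  then have "finite {card S | S. vertex_cover V F S}"
    by (rule finite_subset) simp
  moreover have "vertex_cover V F V"
    using assms(2) unfolding vertex_cover_def by blast
  ultimately have "vertex_cover_number V F \<in> {card S | S. vertex_cover V F S}"
    unfolding vertex_cover_number_def by (intro Min_in) auto
  then show ?thesis using that by auto
qed

theorem card_minus_independence_number_eq_vertex_cover_number:
  assumes "finite V" and "\<Union>F \<subseteq> V"
  shows "card V - independence_number V F = vertex_cover_number V F"
proof -
  obtain I where I: "indep_set V F I" "card I = independence_number V F"
    using maximum_indep_set_exists[OF assms(1)] .
  obtain C where C: "vertex_cover V F C" "card C = vertex_cover_number V F"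
    using minimum_vertex_cover_exists[OF assms] .
  have "I \<subseteq> V" "C \<subseteq> V"
    using I(1) C(1) unfolding indep_set_def vertex_cover_def by auto
  then have card_Diff: "card (V - I) = card V - card I" "card (V - C) = card V - card C"
    and "card C \<le> card V"
    using assms(1) by (auto simp: card_Diff_subset finite_subset card_mono)
  have "vertex_cover_number V F \<le> card (V - I)"
    using vertex_cover_number_le_card[OF assms(1) vertex_cover_Diff_indep_set[OF I(1) assms(2)]] .
  moreover have "card (V - C) \<le> independence_number V F"
    using indep_set_card_le_independence_number[OF assms(1) indep_set_Diff_vertex_cover[OF C(1)]] .
  ultimately show ?thesis
    using card_Diff I(2) C(2) \<open>card C \<le> card V\<close> by linarith
qed

lemma domination_number_le_card:
  assumes "finite V" and "dominating V E S"
  shows "domination_number V E \<le> card S"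
proof -
  have "{card S | S. dominating V E S} \<subseteq> {..card V}"
    using assms(1) unfolding dominating_def by (auto intro: card_mono)
  then show ?thesis
    unfolding domination_number_def using assms(2)
    by (auto intro: Min_le finite_subset)
qed

lemma dominating_Diff_indep_set:
  assumes closed_nbhd_edge: "\<And>v. v \<in> V \<Longrightarrow> \<exists>a b. {a, b} \<in> F \<and> {a, b} \<subseteq> nbhd V E v \<union> {v}"
    and "indep_set V F I"
  shows "dominating V E (V - I)"
  unfolding dominating_def
proof (intro conjI ballI)
  fix v assume "v \<in> V"
  show "v \<in> V - I \<or> (\<exists>u\<in>V - I. u \<in> nbhd V E v)"
  proof (cases "v \<in> I")
    case True
    obtain a b where ab: "{a, b} \<in> F" "{a, b} \<subseteq> nbhd V E v \<union> {v}"
      using closed_nbhd_edge[OF \<open>v \<in> V\<close>] by blast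
    then obtain u where "u \<in> {a, b}" "u \<notin> I"
      using assms(2) unfolding indep_set_def by blast
    then have "u \<in> nbhd V E v"
      using ab(2) True by blast
    then show ?thesis
      using \<open>u \<notin> I\<close> unfolding nbhd_def by blast
  qed (use \<open>v \<in> V\<close> in blast)
qed blast

lemma domination_number_le_card_minus_independence_number:
  assumes "finite V"
    and "\<And>v. v \<in> V \<Longrightarrow> \<exists>a b. {a, b} \<in> F \<and> {a, b} \<subseteq> nbhd V E v \<union> {v}"
  shows "domination_number V E \<le> card V - independence_number V F"
proof -
  obtain I where I: "indep_set V F I" "card I = independence_number V F"
    using maximum_indep_set_exists[OF assms(1)] .
  have "I \<subseteq> V"
    using I(1) unfolding indep_set_def by blast
  then have "card (V - I) = card V - independence_number V F"
    using assms(1) I(2) by (simp add: card_Diff_subset finite_subset)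
  then show ?thesis
    using domination_number_le_card[OF assms(1) dominating_Diff_indep_set[OF assms(2) I(1)]]
    by simp
qed

theorem lemma2p3:
  fixes V :: "'a set" and E :: "'a \<Rightarrow> 'a \<Rightarrow> bool" and x y :: "'a \<Rightarrow> 'a"
  assumes "simple_graph V E"
    and "\<And>v. v \<in> V \<Longrightarrow> nbhd V E v \<noteq> {} \<Longrightarrow>
           x v \<noteq> y v \<and> x v \<in> nbhd V E v \<union> {v} \<and> y v \<in> nbhd V E v \<union> {v}"
    and "\<And>v. v \<in> V \<Longrightarrow> nbhd V E v = {} \<Longrightarrow> x v = v \<and> y v = v"
    and "F = (\<lambda>v. {x v, y v}) ` V"
  shows "domination_number V E \<le> card V - independence_number V F
         \<and> card V - independence_number V F = vertex_cover_number V F"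
proof -
  have "finite V"
    using assms(1) unfolding simple_graph_def by blast
  have closed_nbhd_edge: "{x v, y v} \<subseteq> nbhd V E v \<union> {v}" if "v \<in> V" for v
    using assms(2,3)[OF that] by blast
  have "{x v, y v} \<subseteq> V" if "v \<in> V" for v
    using closed_nbhd_edge[OF that] that unfolding nbhd_def by auto
  then have "\<Union>F \<subseteq> V"
    using assms(4) by auto
  have "\<exists>a b. {a, b} \<in> F \<and> {a, b} \<subseteq> nbhd V E v \<union> {v}" if "v \<in> V" for v
  proof -
    have "{x v, y v} \<in> F"
      using assms(4) that by blast
    then show ?thesis
      using closed_nbhd_edge[OF that] by blast
  qed
  then show ?thesis
    using domination_number_le_card_minus_independence_number[OF \<open>finite V\<close>]
      card_minus_independence_number_eq_vertex_cover_number[OF \<open>finite V\<close> \<open>\<Union>F \<subseteq> V\<close>]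
    by blast
qed

end
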